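(* Let $X$ be a complete separable metric space and $d\ge1$. Any sequence of probability measures on $X\otimes\mathbb R^d$ whose marginals on $X$ form a uniformly tight family has a subsequence that converges weaguely (to some sub-probability measure on $X\otimes\mathbb R^d$).
   Context: A sequence $\lambda_n$ of sub-probability measures on $X\otimes\mathbb R^d$ converges weaguely to a sub-probability measure $\lambda$ if $\int F\,\mathrm d\lambda_n\to\int F\,\mathrm d\lambda$ for every continuous $F:X\otimes\mathbb R^d\to\mathbb R$ with $\lim_{|y|\to\infty}\sup_{x\in X}|F(x,y)|=0$. *)

theory Defs
  imports "HOL-Probability.Probability"
begin

definition uniformly_tight :: "(nat \<Rightarrow> 'a::topological_space measure) \<Rightarrow> bool" where
  "uniformly_tight \<mu> \<longleftrightarrow>
     (\<forall>e>0. \<exists>K. compact K \<and> (\<forall>n. measure (\<mu> n) (UNIV - K) < e))"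

definition weague_conv ::
  "(nat \<Rightarrow> ('a::topological_space \<times> 'b::real_normed_vector) measure) \<Rightarrow> ('a \<times> 'b) measure \<Rightarrow> bool" where
  "weague_conv L l \<longleftrightarrow>
     (\<forall>F :: 'a \<times> 'b \<Rightarrow> real.
        continuous_on UNIV F \<and> bounded (range F) \<and>
        (\<forall>e>0. \<exists>R. \<forall>x y. R \<le> norm y \<longrightarrow> \<bar>F (x, y)\<bar> < e) \<longrightarrow>
        (\<lambda>n. integral\<^sup>L (L n) F) \<longlonglongrightarrow> integral\<^sup>L l F)"

end

theory Submission
  imports Defs
begin

text \<open>The measures are transported to the real line, where Helly's selection theorem applies.
  Squashing y to y / (1 + |y|) and taking distances to dense sequences embeds X \<times> R^d into the
  Hilbert cube, every boundary sphere {x} \<times> {|v| = 1} of the compactified fibres being collapsed to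
  a point; interleaving binary digits and writing them in base 4 with digits 1 and 2 codes the cube
  into a closed set of reals on which decoding is continuous. Helly's theorem yields a weakly convergent subsequence of the coded
  measures. A test function F vanishing as |y| \<rightarrow> \<infinity> extends continuously, by 0 on the spheres,
  to the codes of K \<times> R^d for each compact K of the tightness condition, and by Tietze to all of R;
  tightness bounds the error made outside K uniformly in n and, by the portmanteau inequality for
  closed sets, in the limit. The limit measure is the limit restricted to codes of genuine points and
  pulled back to X \<times> R^d; mass escaping to |y| = \<infinity> is lost, whence only a sub-probability measure.\<close>

lemma continuous_on_compact_image_factor:
  fixes \<Psi> :: "'a::t2_space \<Rightarrow> 'b::t2_space" and f :: "'a \<Rightarrow> 'c::topological_space"
  assumes "compact C" "continuous_on C \<Psi>" "continuous_on C f"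
    and factor: "\<And>p. p \<in> C \<Longrightarrow> g (\<Psi> p) = f p"
  shows "continuous_on (\<Psi> ` C) g"
  unfolding continuous_on_closed_invariant
proof (intro allI impI)
  fix D :: "'c set" assume "closed D"
  have "closed (C \<inter> f -` D)"
    using continuous_closed_preimage[OF assms(3) compact_imp_closed[OF assms(1)] \<open>closed D\<close>]
    by (simp add: Int_commute)
  then have "compact (C \<inter> (C \<inter> f -` D))" by (rule compact_Int_closed[OF assms(1)])
  then have "compact (\<Psi> ` (C \<inter> f -` D))"
    by (intro compact_continuous_image continuous_on_subset[OF assms(2)]) auto
  then have "closed (\<Psi> ` (C \<inter> f -` D))" by (rule compact_imp_closed)
  moreover have "\<Psi> ` (C \<inter> f -` D) \<inter> \<Psi> ` C = g -` D \<inter> \<Psi> ` C"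
    using factor by auto
  ultimately show "\<exists>A. closed A \<and> A \<inter> \<Psi> ` C = g -` D \<inter> \<Psi> ` C" by blast
qed

lemma LIMSEQ_uniform_approximation:
  fixes a :: "nat \<Rightarrow> real" and L :: real
  assumes "\<delta> \<longlonglongrightarrow> 0"
    and "\<And>j n. \<bar>a n - b j n\<bar> \<le> \<delta> j" "\<And>j. b j \<longlonglongrightarrow> c j" "\<And>j. \<bar>c j - L\<bar> \<le> \<delta> j"
  shows "a \<longlonglongrightarrow> L"
proof (rule LIMSEQ_I)
  fix e :: real assume "0 < e"
  then obtain j where j: "\<bar>\<delta> j\<bar> < e / 3"
    using LIMSEQ_D[OF assms(1), of "e / 3"] by auto
  obtain N where N: "\<And>n. N \<le> n \<Longrightarrow> \<bar>b j n - c j\<bar> < e / 3"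
    using LIMSEQ_D[OF assms(3), of "e / 3" j] \<open>0 < e\<close> by auto
  have "\<bar>a n - L\<bar> < e" if "N \<le> n" for n
    using assms(2)[of n j] N[OF that] assms(4)[of j] j by linarith
  then show "\<exists>N. \<forall>n\<ge>N. norm (a n - L) < e" by auto
qed

lemma integral_diff_le_measure:
  fixes f g :: "'x \<Rightarrow> real"
  assumes "finite_measure N" and [measurable]: "f \<in> borel_measurable N" "g \<in> borel_measurable N"
    and bounded: "\<And>x. \<bar>f x\<bar> \<le> B" "\<And>x. \<bar>g x\<bar> \<le> B"
    and [measurable]: "A \<in> sets N" and eq: "\<And>x. x \<in> space N \<Longrightarrow> x \<notin> A \<Longrightarrow> f x = g x"
  shows "\<bar>integral\<^sup>L N f - integral\<^sup>L N g\<bar> \<le> 2 * B * measure N A"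
proof -
  interpret finite_measure N by fact
  have "0 \<le> B" using bounded(1)[of undefined] by linarith
  have int: "integrable N f" "integrable N g"
    using bounded by (auto intro: integrable_const_bound[where B=B])
  have int_indicator: "integrable N (\<lambda>x. 2 * B * indicator A x :: real)"
    by (rule integrable_const_bound[where B="2 * B"]) (use \<open>0 \<le> B\<close> in \<open>auto simp: indicator_def\<close>)
  have "\<bar>integral\<^sup>L N f - integral\<^sup>L N g\<bar> = \<bar>\<integral>x. f x - g x \<partial>N\<bar>"
    using int by simp
  also have "\<dots> \<le> (\<integral>x. \<bar>f x - g x\<bar> \<partial>N)"
    using integral_norm_bound[of N "\<lambda>x. f x - g x"] by simp
  also have "\<dots> \<le> (\<integral>x. 2 * B * indicator A x \<partial>N)"
  proof (rule integral_mono)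
    fix x assume "x \<in> space N"
    then show "\<bar>f x - g x\<bar> \<le> 2 * B * indicator A x"
      using bounded[of x] eq[of x] by (cases "x \<in> A") auto
  qed (use int int_indicator in auto)
  also have "\<dots> = 2 * B * measure N A" by (simp add: sets.Int_space_eq2)
  finally show ?thesis .
qed

lemma weak_conv_closed_lower_bound:
  fixes \<mu> :: "nat \<Rightarrow> real measure"
  assumes \<mu>: "\<And>n. real_distribution (\<mu> n)" and L: "real_distribution L"
    and "weak_conv_m \<mu> L" "closed T" and lower: "\<And>n. a \<le> measure (\<mu> n) T"
  shows "a \<le> measure L T"
proof (cases "T = {}")
  case True
  then show ?thesis using lower[of 0] by simp
next
  case False
  interpret L: real_distribution L by fact
  define f where "f m x = max 0 (1 - real m * infdist x T)" for m x
  have cont: "isCont (f m) x" for m x unfolding f_def by (intro continuous_intros)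
  have bounded: "norm (f m x) \<le> 1" for m x unfolding f_def using infdist_nonneg[of x T] by auto
  have meas: "f m \<in> borel_measurable borel" for m
    by (intro borel_measurable_continuous_onI continuous_at_imp_continuous_on ballI cont)
  have "a \<le> integral\<^sup>L L (f m)" for m
  proof (rule LIMSEQ_le_const[OF weak_conv_imp_integral_bdd_continuous_conv[OF \<mu> L]])
    show "\<exists>N. \<forall>n\<ge>N. a \<le> integral\<^sup>L (\<mu> n) (f m)"
    proof (intro exI allI impI)
      fix n
      interpret real_distribution "\<mu> n" by (rule \<mu>)
      have "indicator T x \<le> f m x" for x
        unfolding f_def by (auto simp: indicator_def infdist_zero)
      then have "integral\<^sup>L (\<mu> n) (indicator T) \<le> integral\<^sup>L (\<mu> n) (f m)"
        using bounded meas \<open>closed T\<close>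
        by (intro integral_mono integrable_const_bound[where B=1]) auto
      then show "a \<le> integral\<^sup>L (\<mu> n) (f m)" using lower[of n] by simp
    qed
  qed (use assms(3) cont bounded in auto)
  moreover have "(\<lambda>m. integral\<^sup>L L (f m)) \<longlonglongrightarrow> integral\<^sup>L L (indicator T)"
  proof (rule integral_dominated_convergence[where w="\<lambda>_. 1"])
    show "AE x in L. (\<lambda>m. f m x) \<longlonglongrightarrow> indicator T x"
    proof (rule AE_I2)
      fix x
      show "(\<lambda>m. f m x) \<longlonglongrightarrow> indicator T x"
      proof (cases "x \<in> T")
        case False
        then have "0 < infdist x T"
          using \<open>closed T\<close> \<open>T \<noteq> {}\<close> in_closed_iff_infdist_zero[of T x] infdist_nonneg[of x T] by auto
        then obtain N :: nat where "1 < real N * infdist x T"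
          using reals_Archimedean3 by blast
        then have "f m x = 0" if "N \<le> m" for m
          using that mult_right_mono[of "real N" "real m" "infdist x T"] infdist_nonneg[of x T]
          unfolding f_def by auto
        then show ?thesis using False by (auto intro: tendsto_eventually eventually_sequentiallyI)
      qed (simp add: f_def)
    qed
  qed (use meas bounded \<open>closed T\<close> in auto)
  ultimately show ?thesis by (simp add: LIMSEQ_le_const)
qed

section \<open>Coding sequences in [0,1) by reals\<close>

definition binary_digit :: "real \<Rightarrow> nat \<Rightarrow> int" where
  "binary_digit u j = \<lfloor>2^(Suc j) * u\<rfloor> - 2 * \<lfloor>2^j * u\<rfloor>"

lemma binary_digit_01: "binary_digit u j = 0 \<or> binary_digit u j = 1"
proof -
  define t where "t = 2^j * u"
  have "2 * \<lfloor>t\<rfloor> \<le> \<lfloor>2 * t\<rfloor>" by (simp add: le_floor_iff)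
  moreover have "\<lfloor>2 * t\<rfloor> < 2 * \<lfloor>t\<rfloor> + 2"
    by (subst floor_less_iff) (use real_of_int_floor_add_one_gt[of t] in linarith)
  moreover have "2^(Suc j) * u = 2 * t" by (simp add: t_def)
  ultimately show ?thesis unfolding binary_digit_def t_def by linarith
qed

lemma sum_binary_digits:
  "(\<Sum>j<n. binary_digit u j / 2^(Suc j)) = \<lfloor>2^n * u\<rfloor> / 2^n - \<lfloor>u\<rfloor>"
  by (induction n) (simp_all add: binary_digit_def field_simps)

lemma binary_expansion:
  assumes "0 \<le> u" "u < 1"
  shows "(\<lambda>j. binary_digit u j / 2^(Suc j)) sums u"
proof -
  have lower: "u - (1/2)^n \<le> \<lfloor>2^n * u\<rfloor> / 2^n" for n :: nat
  proof -
    have "(2^n * u - 1) / 2^n \<le> \<lfloor>2^n * u\<rfloor> / 2^n"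
      by (intro divide_right_mono) (linarith, simp)
    then show ?thesis by (simp add: field_simps power_divide)
  qed
  have upper: "\<lfloor>2^n * u\<rfloor> / 2^n \<le> u" for n :: nat
    by (simp add: divide_le_eq mult.commute)
  have "(\<lambda>n. u - (1/2::real)^n) \<longlonglongrightarrow> u"
    using tendsto_diff[OF tendsto_const LIMSEQ_realpow_zero[of "1/2::real"]] by simp
  then have "(\<lambda>n. \<lfloor>2^n * u\<rfloor> / 2^n) \<longlonglongrightarrow> u"
    by (rule tendsto_sandwich[rotated 2, OF _ tendsto_const]) (auto intro: always_eventually lower upper)
  moreover have "\<lfloor>u\<rfloor> = 0" using assms by (simp add: floor_eq_iff)
  ultimately show ?thesis unfolding sums_def sum_binary_digits by simp
qed

definition binary_seq :: "(nat \<Rightarrow> int) \<Rightarrow> bool" where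
  "binary_seq a \<longleftrightarrow> (\<forall>m. a m = 0 \<or> a m = 1)"

text \<open>Using only the base-4 digits 1 and 2 keeps every code at distance at least 1/3 from the
  4-adic grid (this is the set \<open>code_set\<close> below), so that the digits depend continuously
  on the code.\<close>
definition cantor_code :: "(nat \<Rightarrow> int) \<Rightarrow> real" where
  "cantor_code a = (\<Sum>m. (1 + a m) / 4^(Suc m))"

lemma cantor_code_sums:
  assumes "binary_seq a"
  shows "(\<lambda>m. (1 + real_of_int (a m)) / 4^(Suc m)) sums cantor_code a"
    and "1/3 \<le> cantor_code a" "cantor_code a \<le> 2/3"
proof -
  have a01: "0 \<le> a m" "a m \<le> 1" for m
    using assms[unfolded binary_seq_def, rule_format, of m] by auto
  have geom: "(\<lambda>m. 1 / 4^(Suc m) :: real) sums (1/3)"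
    using sums_mult[OF geometric_sums[of "1/4::real"], of "1/4"] by (simp add: power_divide)
  have geom2: "(\<lambda>m. 2 * (1 / 4^(Suc m)) :: real) sums (2/3)"
    using sums_mult[OF geom, of 2] by simp
  have lower: "1 / 4^(Suc m) \<le> (1 + real_of_int (a m)) / 4^(Suc m)" for m
    using a01[of m] by (intro divide_right_mono) auto
  have upper: "(1 + real_of_int (a m)) / 4^(Suc m) \<le> 2 * (1 / 4^(Suc m))" for m
    using divide_right_mono[of "1 + real_of_int (a m)" 2 "4^Suc m"] a01[of m] by simp
  have "summable (\<lambda>m. (1 + real_of_int (a m)) / 4^(Suc m))"
    by (rule summable_comparison_test'[OF sums_summable[OF geom2], of 0]) (use a01 upper in auto)
  then show sums: "(\<lambda>m. (1 + real_of_int (a m)) / 4^(Suc m)) sums cantor_code a"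
    unfolding cantor_code_def by (simp add: summable_sums)
  show "1/3 \<le> cantor_code a" by (rule sums_le[OF lower geom sums])
  show "cantor_code a \<le> 2/3" by (rule sums_le[OF upper sums geom2])
qed

lemma binary_seq_shift: "binary_seq a \<Longrightarrow> binary_seq (\<lambda>m. a (m + n))"
  unfolding binary_seq_def by auto

lemma cantor_code_Suc:
  assumes "binary_seq a"
  shows "4 * cantor_code a = (1 + a 0) + cantor_code (\<lambda>m. a (Suc m))"
proof -
  have shift: "binary_seq (\<lambda>m. a (Suc m))" using binary_seq_shift[OF assms, of 1] by simp
  have "(\<lambda>m. (1 + real_of_int (a (Suc m))) / 4^(Suc (Suc m))) sums (cantor_code a - (1 + a 0) / 4)"
    using sums_split_initial_segment[OF cantor_code_sums(1)[OF assms], of 1] by simp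
  moreover have "(\<lambda>m. (1 + real_of_int (a (Suc m))) / 4^(Suc (Suc m))) sums (cantor_code (\<lambda>m. a (Suc m)) / 4)"
    using sums_divide[OF cantor_code_sums(1)[OF shift], of 4] by (simp add: field_simps)
  ultimately show ?thesis using sums_unique2 by (fastforce simp: field_simps)
qed

fun cantor_prefix :: "(nat \<Rightarrow> int) \<Rightarrow> nat \<Rightarrow> int" where
  "cantor_prefix a 0 = 0"
| "cantor_prefix a (Suc n) = 4 * cantor_prefix a n + (1 + a n)"

lemma cantor_code_pow:
  assumes "binary_seq a"
  shows "4^n * cantor_code a = cantor_prefix a n + cantor_code (\<lambda>m. a (m + n))"
proof (induction n)
  case (Suc n)
  have "4^Suc n * cantor_code a = 4 * cantor_prefix a n + 4 * cantor_code (\<lambda>m. a (m + n))"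
    using Suc by simp
  also have "4 * cantor_code (\<lambda>m. a (m + n)) = (1 + a n) + cantor_code (\<lambda>m. a (m + Suc n))"
    using cantor_code_Suc[OF binary_seq_shift[OF assms, of n]] by simp
  finally show ?case by simp
qed simp

lemma cantor_code_pow_bounds:
  assumes "binary_seq a"
  shows "cantor_prefix a n + 1/3 \<le> 4^n * cantor_code a" "4^n * cantor_code a \<le> cantor_prefix a n + 2/3"
  using cantor_code_sums(2,3)[OF binary_seq_shift[OF assms, of n]] unfolding cantor_code_pow[OF assms]
  by simp_all

definition quaternary_digit :: "real \<Rightarrow> nat \<Rightarrow> int" where
  "quaternary_digit c n = \<lfloor>4^(Suc n) * c\<rfloor> - 4 * \<lfloor>4^n * c\<rfloor>"

lemma quaternary_digit_cantor_code:
  assumes "binary_seq a"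
  shows "quaternary_digit (cantor_code a) n = 1 + a n"
proof -
  have floor: "\<lfloor>4^k * cantor_code a\<rfloor> = cantor_prefix a k" for k
    using cantor_code_pow_bounds[OF assms, of k] by (simp add: floor_eq_iff)
  show ?thesis unfolding quaternary_digit_def floor by simp
qed

definition code_set :: "real set" where
  "code_set = {c. 0 \<le> c \<and> c \<le> 1 \<and> (\<forall>n (k::int). 1/3 \<le> \<bar>4^n * c - k\<bar>)}"

lemma closed_code_set: "closed code_set"
proof -
  have "code_set = {c. 0 \<le> c} \<inter> {c. c \<le> 1} \<inter> (\<Inter>n. \<Inter>k::int. {c. 1/3 \<le> \<bar>4^n * c - k\<bar>})"
    unfolding code_set_def by auto
  also have "closed \<dots>"
    by (intro closed_Int closed_INT ballI closed_Collect_le continuous_intros)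
  finally show ?thesis .
qed

lemma cantor_code_in_code_set:
  assumes "binary_seq a"
  shows "cantor_code a \<in> code_set"
proof -
  have "1/3 \<le> \<bar>4^n * cantor_code a - k\<bar>" for n and k :: int
    using cantor_code_pow_bounds[OF assms, of n]
    by (cases "k \<le> cantor_prefix a n") (auto dest!: of_int_le_iff[THEN iffD2])
  then show ?thesis using cantor_code_sums(2,3)[OF assms] unfolding code_set_def by auto
qed

lemma code_set_frac:
  assumes "c \<in> code_set"
  shows "\<lfloor>4^n * c\<rfloor> + 1/3 \<le> 4^n * c" "4^n * c \<le> \<lfloor>4^n * c\<rfloor> + 2/3"
proof -
  have "\<forall>n (k::int). 1/3 \<le> \<bar>4^n * c - k\<bar>" using assms unfolding code_set_def by blast
  then have "1/3 \<le> \<bar>4^n * c - \<lfloor>4^n * c\<rfloor>\<bar>" "1/3 \<le> \<bar>4^n * c - (\<lfloor>4^n * c\<rfloor> + 1)\<bar>"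
    by (metis of_int_add of_int_1)+
  then show "\<lfloor>4^n * c\<rfloor> + 1/3 \<le> 4^n * c" "4^n * c \<le> \<lfloor>4^n * c\<rfloor> + 2/3"
    by linarith+
qed

lemma quaternary_digit_code_set:
  assumes "c \<in> code_set"
  shows "quaternary_digit c n = 1 \<or> quaternary_digit c n = 2"
proof -
  define t where "t = 4^n * c"
  have frac: "\<lfloor>t\<rfloor> + 1/3 \<le> t" "t \<le> \<lfloor>t\<rfloor> + 2/3"
    using code_set_frac[OF assms, of n] by (simp_all add: t_def)
  have "4 * \<lfloor>t\<rfloor> + 1 \<le> \<lfloor>4 * t\<rfloor>" by (subst le_floor_iff) (use frac in simp)
  moreover have "\<lfloor>4 * t\<rfloor> < 4 * \<lfloor>t\<rfloor> + 3" by (subst floor_less_iff) (use frac in simp)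
  moreover have "4^(Suc n) * c = 4 * t" by (simp add: t_def)
  ultimately show ?thesis unfolding quaternary_digit_def t_def by linarith
qed

lemma isCont_floor_code_set:
  assumes "c \<in> code_set"
  shows "isCont (\<lambda>x. real_of_int \<lfloor>4^n * x\<rfloor>) c"
proof -
  have "\<forall>\<^sub>F x in nhds c. \<lfloor>4^n * x\<rfloor> = \<lfloor>4^n * c\<rfloor>"
  proof (rule eventually_nhds_metric[THEN iffD2], intro exI conjI allI impI)
    show "0 < 1 / (3 * 4^n :: real)" by simp
    fix x assume "dist x c < 1 / (3 * 4^n)"
    moreover have "\<bar>4^n * x - 4^n * c\<bar> = 4^n * dist x c"
      by (simp add: dist_real_def abs_mult flip: right_diff_distrib)
    ultimately have "\<bar>4^n * x - 4^n * c\<bar> < 1/3" by (simp add: field_simps)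
    then show "\<lfloor>4^n * x\<rfloor> = \<lfloor>4^n * c\<rfloor>"
      using code_set_frac[OF assms, of n] unfolding floor_eq_iff by linarith
  qed
  then have "\<forall>\<^sub>F x in at c. real_of_int \<lfloor>4^n * x\<rfloor> = real_of_int \<lfloor>4^n * c\<rfloor>"
    unfolding eventually_at_filter by (rule eventually_mono) auto
  then show ?thesis unfolding isCont_def by (rule tendsto_eventually)
qed

lemma continuous_on_quaternary_digit: "continuous_on code_set (\<lambda>c. real_of_int (quaternary_digit c n))"
  unfolding quaternary_digit_def of_int_diff of_int_mult
  by (intro continuous_at_imp_continuous_on ballI continuous_intros isCont_floor_code_set)

definition encode_seq :: "(nat \<Rightarrow> real) \<Rightarrow> real" where
  "encode_seq w = cantor_code (\<lambda>n. binary_digit (w (fst (prod_decode n))) (snd (prod_decode n)))"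

definition decode_seq :: "real \<Rightarrow> nat \<Rightarrow> real" where
  "decode_seq c k = (\<Sum>j. (quaternary_digit c (prod_encode (k, j)) - 1) / 2^(Suc j))"

lemma binary_seq_interleaved: "binary_seq (\<lambda>n. binary_digit (w (fst (prod_decode n))) (snd (prod_decode n)))"
  unfolding binary_seq_def using binary_digit_01 by blast

lemma encode_seq_in_code_set: "encode_seq w \<in> code_set"
  unfolding encode_seq_def by (rule cantor_code_in_code_set[OF binary_seq_interleaved])

lemma decode_encode_seq:
  assumes "\<And>k. 0 \<le> w k" "\<And>k. w k < 1"
  shows "decode_seq (encode_seq w) = w"
proof
  fix k
  have "quaternary_digit (encode_seq w) (prod_encode (k, j)) - 1 = binary_digit (w k) j" for j
    unfolding encode_seq_def quaternary_digit_cantor_code[OF binary_seq_interleaved] by simp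
  then show "decode_seq (encode_seq w) k = w k"
    unfolding decode_seq_def using sums_unique[OF binary_expansion[OF assms]] by simp
qed

lemma continuous_on_decode_seq: "continuous_on code_set decode_seq"
  unfolding decode_seq_def
proof (intro continuous_on_coordinatewise_then_product)
  fix k
  let ?f = "\<lambda>j c. real_of_int (quaternary_digit c (prod_encode (k, j)) - 1) / 2^(Suc j)"
  have bound: "norm (?f j c) \<le> (1/2)^(Suc j)" if "c \<in> code_set" for j c
    using quaternary_digit_code_set[OF that, of "prod_encode (k, j)"] by (auto simp: power_divide)
  have summable: "summable (\<lambda>j. (1/2::real)^(Suc j))" by simp
  have cont: "continuous_on code_set (?f j)" for j
    unfolding of_int_diff by (intro continuous_intros continuous_on_quaternary_digit) simp
  show "continuous_on code_set (\<lambda>c. \<Sum>j. ?f j c)"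
    by (rule uniform_limit_theorem[OF _ Weierstrass_m_test[OF bound summable]])
       (intro always_eventually allI continuous_on_sum cont, simp_all)
qed

lemma measurable_encode_seq [measurable]:
  assumes [measurable]: "\<And>k. (\<lambda>x. f x k) \<in> borel_measurable M"
  shows "(\<lambda>x. encode_seq (f x)) \<in> borel_measurable M"
  unfolding encode_seq_def cantor_code_def binary_digit_def by measurable

section \<open>Embedding X \<times> R^d into the Hilbert cube\<close>

definition dense_seq :: "(nat \<Rightarrow> 'a::metric_space) \<Rightarrow> bool" where
  "dense_seq q \<longleftrightarrow> (\<forall>x e. 0 < e \<longrightarrow> (\<exists>m. dist x (q m) < e))"

lemma dense_seq_exists: "\<exists>q::nat \<Rightarrow> 'a::{metric_space,second_countable_topology}. dense_seq q"
proof -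
  obtain D :: "'a set" where D: "countable D" "\<And>X. open X \<Longrightarrow> X \<noteq> {} \<Longrightarrow> \<exists>d\<in>D. d \<in> X"
    using countable_dense_setE by blast
  have "D \<noteq> {}" using D(2)[of UNIV] by auto
  have "dense_seq (from_nat_into D)"
    unfolding dense_seq_def
  proof (intro allI impI)
    fix x :: 'a and e :: real assume "0 < e"
    then obtain d where "d \<in> D" "dist x d < e" using D(2)[of "ball x e"] by auto
    then show "\<exists>m. dist x (from_nat_into D m) < e"
      using from_nat_into_surj[OF \<open>countable D\<close>] by metis
  qed
  then show ?thesis by blast
qed

definition dense_enum :: "nat \<Rightarrow> 'a::{metric_space,second_countable_topology}" where
  "dense_enum = (SOME q. dense_seq q)"

lemma dense_enum_determines:
  assumes "\<And>m. dist x (dense_enum m) = dist y (dense_enum m)"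
  shows "x = y"
proof (rule ccontr)
  assume "x \<noteq> y"
  have "dense_seq (dense_enum :: nat \<Rightarrow> 'a)"
    unfolding dense_enum_def by (rule someI_ex[OF dense_seq_exists])
  then obtain m where "dist x (dense_enum m) < dist x y / 2"
    using \<open>x \<noteq> y\<close> unfolding dense_seq_def by (metis half_gt_zero zero_less_dist_iff)
  moreover have "dist x y \<le> dist x (dense_enum m) + dist y (dense_enum m)" by (rule dist_triangle2)
  ultimately show False using assms[of m] by linarith
qed

text \<open>The distances to a dense sequence determine a point; the factor 1 - |v| collapses each sphere
  {x} \<times> {|v| = 1} to a point while keeping the map injective where |v| < 1.\<close>
definition cube_coords ::
  "'a::{metric_space,second_countable_topology} \<times> 'b::{real_normed_vector,second_countable_topology}
     \<Rightarrow> nat \<Rightarrow> real" where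
  "cube_coords p k = (if k = 0 then (1 - norm (snd p)) / 2
     else if odd k then 1 / (2 + dist (fst p) (dense_enum ((k - 1) div 2)))
     else (1 - norm (snd p)) / (2 + dist (snd p) (dense_enum ((k - 1) div 2))))"

lemma continuous_on_cube_coords: "continuous_on S cube_coords"
proof (intro continuous_on_coordinatewise_then_product)
  fix k :: nat
  have pos: "2 + dist a b \<noteq> 0" for a b :: "'c::metric_space" using zero_le_dist[of a b] by linarith
  consider "k = 0" | "k \<noteq> 0" "odd k" | "k \<noteq> 0" "even k" by blast
  then show "continuous_on S (\<lambda>p. cube_coords p k)"
    by cases (auto simp: cube_coords_def pos intro!: continuous_intros)
qed

lemma cube_coords_range:
  assumes "norm (snd p) \<le> 1"
  shows "0 \<le> cube_coords p k" "cube_coords p k < 1"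
proof -
  have frac: "0 \<le> t / (2 + d) \<and> t / (2 + d) < 1" if "0 \<le> t" "t < 2" "0 \<le> d" for t d :: real
    using that by (simp add: divide_less_eq)
  have t: "0 \<le> 1 - norm (snd p)" "1 - norm (snd p) < 2" using assms norm_ge_zero[of "snd p"] by linarith+
  let ?m = "dense_enum ((k - 1) div 2)"
  consider "k = 0" | "k \<noteq> 0" "odd k" | "k \<noteq> 0" "even k" by blast
  then have "0 \<le> cube_coords p k \<and> cube_coords p k < 1"
  proof cases
    case 1
    then show ?thesis using frac[OF t, of 0] by (simp add: cube_coords_def)
  next
    case 2
    then show ?thesis using frac[of 1 "dist (fst p) ?m"] by (simp add: cube_coords_def)
  next
    case 3
    then show ?thesis using frac[OF t, of "dist (snd p) ?m"] by (simp add: cube_coords_def)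
  qed
  then show "0 \<le> cube_coords p k" "cube_coords p k < 1" by simp_all
qed

lemma cube_coords_eqD:
  assumes "norm v \<le> 1" "norm v' \<le> 1" and eq: "cube_coords (x, v) = cube_coords (x', v')"
  shows "x = x' \<and> (v = v' \<or> norm v = 1 \<and> norm v' = 1)"
proof -
  have "dist x (dense_enum m) = dist x' (dense_enum m)" for m
    using fun_cong[OF eq, of "2 * m + 1"] by (simp add: cube_coords_def add_pos_nonneg)
  then have x: "x = x'" by (rule dense_enum_determines)
  have norm: "norm v = norm v'" using fun_cong[OF eq, of 0] by (simp add: cube_coords_def)
  have "v = v'" if "norm v \<noteq> 1"
  proof (rule dense_enum_determines)
    fix m
    have "0 < 1 - norm v" using that assms(1) by simp
    then show "dist v (dense_enum m) = dist v' (dense_enum m)"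
      using fun_cong[OF eq, of "2 * m + 2"] norm by (simp add: cube_coords_def add_pos_nonneg)
  qed
  then show ?thesis using x norm by auto
qed

definition squash :: "'b::real_normed_vector \<Rightarrow> 'b" where
  "squash y = y /\<^sub>R (1 + norm y)"

definition unsquash :: "'b::real_normed_vector \<Rightarrow> 'b" where
  "unsquash v = v /\<^sub>R (1 - norm v)"

lemma norm_squash: "norm (squash y) = norm y / (1 + norm y)"
  unfolding squash_def by (simp add: add_pos_nonneg divide_inverse_commute)

lemma norm_squash_less: "norm (squash y) < 1"
  unfolding norm_squash by (simp add: add_pos_nonneg)

lemma norm_unsquash: "norm v < 1 \<Longrightarrow> norm (unsquash v) = norm v / (1 - norm v)"
  unfolding unsquash_def by (simp add: divide_inverse_commute)

lemma unsquash_squash: "unsquash (squash y) = y"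
proof -
  have pos: "0 < 1 + norm y" by (simp add: add_pos_nonneg)
  then have "1 - norm (squash y) = 1 / (1 + norm y)" unfolding norm_squash by (simp add: field_simps)
  moreover have "1 + norm y \<noteq> 0" using pos by simp
  ultimately show ?thesis unfolding unsquash_def by (simp add: squash_def)
qed
lemma squash_unsquash: "norm v < 1 \<Longrightarrow> squash (unsquash v) = v"
proof -
  assume v: "norm v < 1"
  then have "1 + norm (unsquash v) = 1 / (1 - norm v)" unfolding norm_unsquash[OF v] by (simp add: field_simps)
  then show ?thesis unfolding squash_def using v by (simp add: unsquash_def)
qed

lemma continuous_on_squash: "continuous_on S squash"
  unfolding squash_def by (intro continuous_intros) (metis add_pos_nonneg norm_ge_zero zero_less_one less_irrefl)

definition cube_embedding ::
  "'a::{metric_space,second_countable_topology} \<times> 'b::{real_normed_vector,second_countable_topology}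
     \<Rightarrow> nat \<Rightarrow> real" where
  "cube_embedding z = cube_coords (fst z, squash (snd z))"

lemma continuous_on_cube_embedding: "continuous_on S cube_embedding"
proof -
  have "continuous_on S (\<lambda>z. squash (snd z))"
    by (rule continuous_on_compose2[OF continuous_on_squash[of UNIV]]) (auto intro: continuous_intros)
  then have "continuous_on S (\<lambda>z. (fst z, squash (snd z)))" by (intro continuous_intros)
  then show ?thesis
    unfolding cube_embedding_def by (rule continuous_on_compose2[OF continuous_on_cube_coords]) auto
qed

lemma cube_embedding_range: "0 \<le> cube_embedding z k" "cube_embedding z k < 1"
  unfolding cube_embedding_def
  using cube_coords_range[of "(fst z, squash (snd z))"] norm_squash_less[of "snd z"] by simp_all

lemma inj_cube_embedding: "inj cube_embedding"
proof (rule injI)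
  fix z z' :: "'a \<times> 'b" assume "cube_embedding z = cube_embedding z'"
  then have "fst z = fst z' \<and> squash (snd z) = squash (snd z')"
    using cube_coords_eqD[of "squash (snd z)" "squash (snd z')"] norm_squash_less
    unfolding cube_embedding_def by (metis less_imp_le less_irrefl)
  then show "z = z'" by (metis prod_eq_iff unsquash_squash)
qed

definition squashed_fun :: "('a \<times> 'b::real_normed_vector \<Rightarrow> real) \<Rightarrow> 'a \<times> 'b \<Rightarrow> real" where
  "squashed_fun F p = (if norm (snd p) < 1 then F (fst p, unsquash (snd p)) else 0)"

lemma squashed_fun_squash: "squashed_fun F (x, squash y) = F (x, y)"
  unfolding squashed_fun_def by (simp add: norm_squash_less unsquash_squash)

lemma squashed_fun_cube_coords_eq:
  assumes "norm (snd p) \<le> 1" "norm (snd p') \<le> 1" "cube_coords p = cube_coords p'"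
  shows "squashed_fun F p = squashed_fun F p'"
  using cube_coords_eqD[of "snd p" "snd p'" "fst p" "fst p'"] assms unfolding squashed_fun_def by auto

lemma squashed_fun_near_sphere:
  assumes R: "\<And>x y. R \<le> norm y \<Longrightarrow> \<bar>F (x, y)\<bar> < e" and "0 < e" "0 \<le> R"
    and near: "R / (1 + R) < norm (snd q)"
  shows "\<bar>squashed_fun F q\<bar> < e"
proof (cases "norm (snd q) < 1")
  case True
  have "R < norm (snd q) * (1 + R)" using near \<open>0 \<le> R\<close> by (simp add: field_simps)
  then have "R \<le> norm (snd q) / (1 - norm (snd q))" using True by (simp add: field_simps)
  then show ?thesis using R True by (simp add: squashed_fun_def norm_unsquash)
qed (simp add: squashed_fun_def \<open>0 < e\<close>)

lemma continuous_on_squashed_fun: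
  fixes F :: "'a::metric_space \<times> 'b::real_normed_vector \<Rightarrow> real"
  assumes cont: "continuous_on UNIV F"
    and vanish: "\<forall>e>0. \<exists>R. \<forall>x y. R \<le> norm y \<longrightarrow> \<bar>F (x, y)\<bar> < e"
  shows "continuous_on (UNIV \<times> cball 0 1) (squashed_fun F)"
proof (unfold continuous_on_eq_continuous_within, intro ballI)
  let ?S = "(UNIV::'a set) \<times> cball (0::'b) 1"
  fix p assume "p \<in> ?S"
  show "continuous (at p within ?S) (squashed_fun F)"
  proof (cases "norm (snd p) < 1")
    case True
    define U where "U = {p :: 'a \<times> 'b. norm (snd p) < 1}"
    have "open U" unfolding U_def by (intro open_Collect_less continuous_intros)
    have "continuous_on U (\<lambda>p. F (fst p, unsquash (snd p)))"
      unfolding unsquash_def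
      by (rule continuous_on_compose2[OF cont]) (auto simp: U_def intro!: continuous_intros)
    moreover have "p \<in> U" using True by (simp add: U_def)
    ultimately have "isCont (\<lambda>p. F (fst p, unsquash (snd p))) p"
      using continuous_on_eq_continuous_at[OF \<open>open U\<close>] by blast
    then have "((\<lambda>p. F (fst p, unsquash (snd p))) \<longlongrightarrow> F (fst p, unsquash (snd p))) (at p within ?S)"
      using continuous_at_imp_continuous_within continuous_within by blast
    then have "(squashed_fun F \<longlongrightarrow> F (fst p, unsquash (snd p))) (at p within ?S)"
      by (rule Lim_transform_within_open[OF _ \<open>open U\<close>]) (use True in \<open>auto simp: U_def squashed_fun_def\<close>)
    then show ?thesis unfolding continuous_within using True by (simp add: squashed_fun_def)
  next
    case False
    then have sphere: "norm (snd p) = 1" using \<open>p \<in> ?S\<close> by auto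
    show ?thesis unfolding continuous_within_eps_delta
    proof (intro allI impI)
      fix e :: real assume "0 < e"
      then obtain R where R: "\<And>x y. R \<le> norm y \<Longrightarrow> \<bar>F (x, y)\<bar> < e" using vanish by blast
      define R' where "R' = max R 0"
      have R': "\<And>x y. R' \<le> norm y \<Longrightarrow> \<bar>F (x, y)\<bar> < e" "0 \<le> R'"
        using R unfolding R'_def by auto
      have "\<bar>squashed_fun F q\<bar> < e" if "dist q p < 1 / (1 + R')" for q
      proof (rule squashed_fun_near_sphere[where F=F, OF R'(1) \<open>0 < e\<close> R'(2)])
        have "norm (snd p) - norm (snd q) \<le> dist q p"
          using dist_snd_le[of q p] norm_triangle_ineq2[of "snd p" "snd q"]
          by (simp add: dist_norm norm_minus_commute)
        then have "1 - 1 / (1 + R') < norm (snd q)" using that sphere by linarith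
        moreover have "R' / (1 + R') = 1 - 1 / (1 + R')" using \<open>0 \<le> R'\<close> by (simp add: field_simps)
        ultimately show "R' / (1 + R') < norm (snd q)" by simp
      qed
      moreover have "squashed_fun F p = 0" using False by (simp add: squashed_fun_def)
      ultimately show "\<exists>d>0. \<forall>q\<in>?S. dist q p < d \<longrightarrow> dist (squashed_fun F q) (squashed_fun F p) < e"
        using \<open>0 \<le> R'\<close> by (intro exI[of _ "1 / (1 + R')"]) (simp add: dist_real_def)
    qed
  qed
qed

section \<open>Codes of points and the limit measure\<close>

definition embed_code ::
  "'a::{metric_space,second_countable_topology} \<times> 'b::{real_normed_vector,second_countable_topology}
     \<Rightarrow> real" where
  "embed_code z = encode_seq (cube_embedding z)"

lemma embed_code_in_code_set: "embed_code z \<in> code_set"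
  unfolding embed_code_def by (rule encode_seq_in_code_set)

lemma decode_embed_code: "decode_seq (embed_code z) = cube_embedding z"
  unfolding embed_code_def by (simp add: decode_encode_seq cube_embedding_range)

lemma measurable_embed_code [measurable]: "embed_code \<in> borel_measurable borel"
  unfolding embed_code_def
proof (rule measurable_encode_seq)
  show "(\<lambda>z. cube_embedding z k) \<in> borel_measurable borel" for k
    by (rule borel_measurable_continuous_onI
        [OF continuous_on_product_then_coordinatewise[OF continuous_on_cube_embedding]])
qed

lemma closed_code_preimage: "closed S \<Longrightarrow> closed (code_set \<inter> decode_seq -` S)"
  by (rule continuous_closed_preimage[OF continuous_on_decode_seq closed_code_set])

definition cube_lift :: "('a::{metric_space,second_countable_topology} \<times>
    'b::{real_normed_vector,second_countable_topology} \<Rightarrow> real) \<Rightarrow> (nat \<Rightarrow> real) \<Rightarrow> real" where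
  "cube_lift F w = squashed_fun F (SOME p. norm (snd p) \<le> 1 \<and> cube_coords p = w)"

lemma cube_lift_cube_coords:
  fixes p :: "'a::{metric_space,second_countable_topology} \<times>
    'b::{real_normed_vector,second_countable_topology}"
  assumes "norm (snd p) \<le> 1"
  shows "cube_lift F (cube_coords p) = squashed_fun F p"
proof -
  let ?p = "SOME p' :: 'a \<times> 'b. norm (snd p') \<le> 1 \<and> cube_coords p' = cube_coords p"
  have "\<exists>p' :: 'a \<times> 'b. norm (snd p') \<le> 1 \<and> cube_coords p' = cube_coords p" using assms by blast
  from someI_ex[OF this] have "norm (snd ?p) \<le> 1 \<and> cube_coords ?p = cube_coords p" .
  then show ?thesis
    unfolding cube_lift_def using assms by (intro squashed_fun_cube_coords_eq) auto
qed

lemma cube_lift_cube_embedding: "cube_lift F (cube_embedding z) = F z"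
  unfolding cube_embedding_def
  by (simp add: cube_lift_cube_coords norm_squash_less less_imp_le squashed_fun_squash)

lemma continuous_on_cube_lift:
  fixes F :: "'a::{metric_space,second_countable_topology} \<times>
    'b::{real_normed_vector,second_countable_topology} \<Rightarrow> real" and C :: "('a \<times> 'b) set"
  assumes "compact C" "C \<subseteq> UNIV \<times> cball 0 1"
    and "continuous_on UNIV F" "\<forall>e>0. \<exists>R. \<forall>x y. R \<le> norm y \<longrightarrow> \<bar>F (x, y)\<bar> < e"
  shows "continuous_on (cube_coords ` C) (cube_lift F)"
proof -
  have "continuous_on C (squashed_fun F)"
    using continuous_on_squashed_fun[OF assms(3,4)] assms(2) by (rule continuous_on_subset)
  moreover have "cube_lift F (cube_coords p) = squashed_fun F p" if "p \<in> C" for p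
    using that assms(2) by (intro cube_lift_cube_coords) auto
  ultimately show ?thesis by (rule continuous_on_compact_image_factor[OF assms(1) continuous_on_cube_coords])
qed

lemma continuous_on_inv_cube_embedding:
  fixes Q :: "('a::{metric_space,second_countable_topology} \<times>
    'b::{real_normed_vector,second_countable_topology}) set"
  assumes "compact Q"
  shows "continuous_on (cube_embedding ` Q) (inv cube_embedding :: _ \<Rightarrow> 'a \<times> 'b)"
  by (rule continuous_on_compact_image_factor[OF assms continuous_on_cube_embedding continuous_on_id])
    (rule inv_f_f[OF inj_cube_embedding])

lemma abs_cube_lift_le:
  assumes "\<And>z. \<bar>F z\<bar> \<le> B"
  shows "\<bar>cube_lift F w\<bar> \<le> B"
proof -
  have "0 \<le> B" using assms[of undefined] by linarith
  then show ?thesis by (simp add: cube_lift_def squashed_fun_def assms)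
qed

definition decode_point :: "real \<Rightarrow> 'a::{metric_space,second_countable_topology} \<times>
    'b::{real_normed_vector,second_countable_topology}" where
  "decode_point c = inv cube_embedding (decode_seq c)"

lemma decode_point_eq: "decode_seq c = cube_embedding z \<Longrightarrow> decode_point c = z"
  by (simp add: decode_point_def inv_f_f[OF inj_cube_embedding])

lemma continuous_on_decode_point:
  fixes Q :: "('a::{metric_space,second_countable_topology} \<times>
    'b::{real_normed_vector,second_countable_topology}) set"
  assumes "compact Q"
  shows "continuous_on (code_set \<inter> decode_seq -` cube_embedding ` Q) (decode_point :: _ \<Rightarrow> 'a \<times> 'b)"
  unfolding decode_point_def
  by (rule continuous_on_compose2[OF continuous_on_inv_cube_embedding[OF assms]
        continuous_on_subset[OF continuous_on_decode_seq]]) auto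

definition coord_codes :: "('a::{metric_space,second_countable_topology} \<times>
    'b::{real_normed_vector,second_countable_topology}) set \<Rightarrow> real set" where
  "coord_codes C = code_set \<inter> decode_seq -` cube_coords ` C"

definition embedded_codes :: "('a::{metric_space,second_countable_topology} \<times>
    'b::{real_normed_vector,second_countable_topology}) set \<Rightarrow> real set" where
  "embedded_codes S = code_set \<inter> decode_seq -` cube_embedding ` S"

lemma closed_coord_codes: "compact C \<Longrightarrow> closed (coord_codes C)"
  unfolding coord_codes_def
  by (intro closed_code_preimage compact_imp_closed compact_continuous_image continuous_on_cube_coords)

lemma closed_embedded_codes: "compact Q \<Longrightarrow> closed (embedded_codes Q)"
  unfolding embedded_codes_def
  by (intro closed_code_preimage compact_imp_closed compact_continuous_image continuous_on_cube_embedding)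

lemma embedded_codes_Union: "embedded_codes (\<Union>\<Q>) = (\<Union>Q\<in>\<Q>. embedded_codes Q)"
  unfolding embedded_codes_def by blast

lemma embed_code_in_coord_codes:
  fixes z :: "'a::{metric_space,second_countable_topology} \<times> 'b::euclidean_space"
  assumes "fst z \<in> A"
  shows "embed_code z \<in> coord_codes (A \<times> cball (0::'b) 1)"
proof -
  have "(fst z, squash (snd z)) \<in> A \<times> cball 0 1"
    using assms norm_squash_less[of "snd z"] by simp
  then have "decode_seq (embed_code z) \<in> cube_coords ` (A \<times> cball (0::'b) 1)"
    unfolding decode_embed_code cube_embedding_def by (rule imageI)
  then show ?thesis using embed_code_in_code_set[of z] by (simp add: coord_codes_def)
qed

lemma cube_lift_coord_codes:
  fixes F :: "'a::{metric_space,second_countable_topology} \<times> 'b::euclidean_space \<Rightarrow> real"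
    and A B :: "'a set"
  assumes "c \<in> coord_codes (A \<times> cball (0::'b) 1)" "A \<subseteq> B"
  shows "cube_lift F (decode_seq c) = indicator (embedded_codes (B \<times> (UNIV :: 'b set))) c * F (decode_point c)"
proof -
  obtain p :: "'a \<times> 'b" where p: "p \<in> A \<times> cball 0 1" "decode_seq c = cube_coords p"
    and "c \<in> code_set"
    using assms(1) unfolding coord_codes_def by blast
  moreover from p(1) have "norm (snd p) \<le> 1" by (auto simp: mem_Times_iff)
  ultimately have lift: "cube_lift F (decode_seq c) = squashed_fun F p"
    by (simp add: cube_lift_cube_coords)
  show ?thesis
  proof (cases "norm (snd p) < 1")
    case True
    define z where "z = (fst p, unsquash (snd p))"
    have "decode_seq c = cube_embedding z"
      using p(2) True by (simp add: z_def cube_embedding_def squash_unsquash)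
    moreover have "z \<in> B \<times> UNIV" using p(1) assms(2) by (auto simp: z_def)
    ultimately have "c \<in> embedded_codes (B \<times> (UNIV :: 'b set))"
      using \<open>c \<in> code_set\<close> unfolding embedded_codes_def by blast
    then show ?thesis
      using lift True \<open>decode_seq c = cube_embedding z\<close>
      by (simp add: decode_point_eq z_def squashed_fun_def)
  next
    case False
    have "c \<notin> embedded_codes (B \<times> (UNIV :: 'b set))"
    proof
      assume "c \<in> embedded_codes (B \<times> (UNIV :: 'b set))"
      then obtain z :: "'a \<times> 'b" where "decode_seq c = cube_coords (fst z, squash (snd z))"
        unfolding embedded_codes_def cube_embedding_def by blast
      then have "snd p = squash (snd z) \<or> norm (squash (snd z)) = 1"
        using cube_coords_eqD[of "snd p" "squash (snd z)" "fst p"] p norm_squash_less[of "snd z"]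
        by (cases p) auto
      then show False using False norm_squash_less[of "snd z"] by auto
    qed
    then show ?thesis using lift False by (simp add: squashed_fun_def)
  qed
qed

lemma cube_lift_extension:
  fixes F :: "'a::{metric_space,second_countable_topology} \<times> 'b::euclidean_space \<Rightarrow> real"
    and A :: "'a set"
  assumes "compact A" "continuous_on UNIV F" "\<forall>e>0. \<exists>R. \<forall>x y. R \<le> norm y \<longrightarrow> \<bar>F (x, y)\<bar> < e"
    and bounded: "\<And>z. \<bar>F z\<bar> \<le> B"
  obtains G where "continuous_on UNIV G"
    "\<And>c. c \<in> coord_codes (A \<times> cball (0::'b) 1) \<Longrightarrow> G c = cube_lift F (decode_seq c)"
    "\<And>c. \<bar>G c\<bar> \<le> B"
proof -
  have compact: "compact (A \<times> cball (0::'b) 1)" using assms(1) by (intro compact_Times compact_cball)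
  have "continuous_on (coord_codes (A \<times> cball (0::'b) 1)) (\<lambda>c. cube_lift F (decode_seq c))"
    unfolding coord_codes_def
    by (rule continuous_on_compose2[OF continuous_on_cube_lift[OF compact _ assms(2,3)]
          continuous_on_subset[OF continuous_on_decode_seq]]) auto
  moreover have "closedin (top_of_set UNIV) (coord_codes (A \<times> cball (0::'b) 1))"
    using closed_coord_codes[OF compact] by simp
  moreover have "0 \<le> B" using bounded[of undefined] by linarith
  ultimately obtain G where "continuous_on UNIV G"
    "\<And>c. c \<in> coord_codes (A \<times> cball (0::'b) 1) \<Longrightarrow> G c = cube_lift F (decode_seq c)"
    "\<And>c. norm (G c) \<le> B"
    by (rule Tietze) (auto intro: abs_cube_lift_le bounded)
  then show ?thesis using that by simp
qed

definition code_limit :: "('a::{metric_space,second_countable_topology} \<times>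
    'b::{real_normed_vector,second_countable_topology}) set \<Rightarrow> real measure \<Rightarrow> ('a \<times> 'b) measure" where
  "code_limit S L = distr (restrict_space L (embedded_codes S)) borel decode_point"

lemma sets_code_limit: "sets (code_limit S L) = sets borel"
  by (simp add: code_limit_def)

context
  fixes \<Q> :: "('a::{metric_space,second_countable_topology} \<times> 'b::euclidean_space) set set"
  assumes countable: "countable \<Q>" and compact: "\<And>Q. Q \<in> \<Q> \<Longrightarrow> compact Q"
begin

lemma sets_embedded_codes [measurable]: "embedded_codes (\<Union>\<Q>) \<in> sets borel"
  unfolding embedded_codes_Union
  by (rule sets.countable_UN'[OF countable]) (auto intro!: borel_closed closed_embedded_codes compact)

lemma measurable_decode_point:
  "decode_point \<in> measurable (restrict_space borel (embedded_codes (\<Union>\<Q>))) (borel :: ('a \<times> 'b) measure)"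
proof (rule measurable_piecewise_restrict[of "embedded_codes ` \<Q>"])
  fix \<Omega> assume "\<Omega> \<in> embedded_codes ` \<Q>"
  then obtain Q where Q: "Q \<in> \<Q>" "\<Omega> = embedded_codes Q" by auto
  then have sub: "\<Omega> \<subseteq> embedded_codes (\<Union>\<Q>)" unfolding embedded_codes_Union by auto
  have closed: "closed \<Omega>" using Q compact by (simp add: closed_embedded_codes)
  then show "\<Omega> \<inter> space (restrict_space borel (embedded_codes (\<Union>\<Q>))) \<in>
      sets (restrict_space borel (embedded_codes (\<Union>\<Q>)))"
    using sub by (auto simp: sets_restrict_space_iff Int_absorb2)
  have "continuous_on \<Omega> (decode_point :: _ \<Rightarrow> 'a \<times> 'b)"
    unfolding Q embedded_codes_def using Q compact by (intro continuous_on_decode_point) auto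
  then have "decode_point \<in> measurable (restrict_space borel \<Omega>) (borel :: ('a \<times> 'b) measure)"
    by (rule borel_measurable_continuous_on_restrict)
  moreover have "restrict_space (restrict_space borel (embedded_codes (\<Union>\<Q>))) \<Omega> = restrict_space borel \<Omega>"
    using sub closed by (subst restrict_restrict_space) (auto simp: Int_absorb1)
  ultimately show "decode_point \<in> measurable (restrict_space (restrict_space borel (embedded_codes (\<Union>\<Q>))) \<Omega>)
      (borel :: ('a \<times> 'b) measure)"
    by simp
qed (use countable in \<open>auto simp: space_restrict_space embedded_codes_Union\<close>)

context
  fixes L :: "real measure"
  assumes L: "real_distribution L"
begin

interpretation L: real_distribution L by (rule L)

lemma measurable_decode_point_L:
  "decode_point \<in> measurable (restrict_space L (embedded_codes (\<Union>\<Q>))) (borel :: ('a \<times> 'b) measure)"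
  using measurable_decode_point
  by (subst measurable_cong_sets[of _ "restrict_space borel (embedded_codes (\<Union>\<Q>))"])
    (simp_all add: sets_restrict_space)

lemma subprob_space_code_limit: "subprob_space (code_limit (\<Union>\<Q>) L)"
proof (rule subprob_spaceI)
  have "emeasure (code_limit (\<Union>\<Q>) L) (space (code_limit (\<Union>\<Q>) L)) = emeasure L (embedded_codes (\<Union>\<Q>))"
    unfolding code_limit_def using measurable_decode_point_L
    by (simp add: emeasure_distr emeasure_restrict_space space_restrict_space)
  then show "emeasure (code_limit (\<Union>\<Q>) L) (space (code_limit (\<Union>\<Q>) L)) \<le> 1"
    using L.emeasure_le_1 by simp
qed (simp add: code_limit_def)

lemma integral_code_limit:
  fixes F :: "'a \<times> 'b \<Rightarrow> real"
  assumes [measurable]: "F \<in> borel_measurable borel"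
  shows "integral\<^sup>L (code_limit (\<Union>\<Q>) L) F =
    (\<integral>c. indicator (embedded_codes (\<Union>\<Q>)) c * F (decode_point c) \<partial>L)"
proof -
  have "integral\<^sup>L (code_limit (\<Union>\<Q>) L) F = (\<integral>c. F (decode_point c) \<partial>restrict_space L (embedded_codes (\<Union>\<Q>)))"
    unfolding code_limit_def by (rule integral_distr[OF measurable_decode_point_L assms])
  also have "\<dots> = (\<integral>c. indicator (embedded_codes (\<Union>\<Q>)) c * F (decode_point c) \<partial>L)"
    by (subst integral_restrict_space) (simp_all add: L.events_eq_borel)
  finally show ?thesis .
qed

lemma borel_measurable_indicator_decode_point:
  fixes F :: "'a \<times> 'b \<Rightarrow> real"
  assumes [measurable]: "F \<in> borel_measurable borel"
  shows "(\<lambda>c. indicator (embedded_codes (\<Union>\<Q>)) c * F (decode_point c)) \<in> borel_measurable L"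
proof -
  have "(\<lambda>c. F (decode_point c)) \<in> borel_measurable (restrict_space L (embedded_codes (\<Union>\<Q>)))"
    by (rule measurable_compose[OF measurable_decode_point_L assms])
  then show ?thesis
    by (subst (asm) borel_measurable_restrict_space_iff) (simp_all add: L.events_eq_borel)
qed

end

end

section \<open>Weague limits of sequences with tight marginals\<close>

locale tight_marginals =
  fixes M :: "nat \<Rightarrow> ('a::{metric_space,second_countable_topology} \<times>
      'b::euclidean_space) measure"
    and K :: "nat \<Rightarrow> 'a set"
  assumes prob_space_M: "\<And>n. prob_space (M n)"
    and sets_M: "\<And>n. sets (M n) = sets borel"
    and compact_K: "\<And>j. compact (K j)"
    and measure_outside_K: "\<And>j n. measure (M n) (- (K j \<times> UNIV)) < 1 / Suc j"
begin

lemma space_M: "space (M n) = UNIV"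
  using sets_eq_imp_space_eq[OF sets_M[of n]] by simp

lemma measurable_M: "measurable (M n) N = measurable borel N"
  by (rule measurable_cong_sets[OF sets_M refl])

lemma measure_distr_embed_code:
  "A \<in> sets borel \<Longrightarrow> measure (distr (M n) borel embed_code) A = measure (M n) (embed_code -` A)"
  by (simp add: measure_distr measurable_M space_M)

lemma real_distribution_distr_embed_code: "real_distribution (distr (M n) borel embed_code)"
proof -
  interpret prob_space "M n" by (rule prob_space_M)
  have "prob_space (distr (M n) borel embed_code)" by (rule prob_space_distr) (simp add: measurable_M)
  then show ?thesis by (auto simp: real_distribution_def real_distribution_axioms_def)
qed

lemma tight_distr_embed_code: "tight (\<lambda>n. distr (M n) borel embed_code)"
  unfolding tight_def
proof (intro conjI allI impI real_distribution_distr_embed_code)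
  fix e :: real assume "0 < e"
  have "measure (distr (M n) borel embed_code) {-1<..1} = 1" for n
  proof -
    interpret prob_space "M n" by (rule prob_space_M)
    have "embed_code -` {-1<..1} = space (M n)"
      using embed_code_in_code_set unfolding code_set_def space_M by force
    then show ?thesis using measure_distr_embed_code[of "{-1<..1}" n] prob_space by simp
  qed
  then show "\<exists>a b. a < b \<and> (\<forall>n. 1 - e < measure (distr (M n) borel embed_code) {a<..b})"
    using \<open>0 < e\<close> by (intro exI[of _ "-1"] exI[of _ 1]) auto
qed

lemma sets_outside_K: "- (K j \<times> (UNIV :: 'b set)) \<in> sets borel"
proof -
  have "closed (K j \<times> (UNIV :: 'b set))" by (simp add: closed_Times compact_imp_closed compact_K)
  from sets.compl_sets[OF borel_closed[OF this]] show ?thesis by (simp add: Compl_eq_Diff_UNIV)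
qed

definition compact_cover :: "('a \<times> 'b) set set" where
  "compact_cover = range (\<lambda>(j, i). K j \<times> cball 0 (real i))"

lemma countable_compact_cover: "countable compact_cover"
  by (simp add: compact_cover_def)

lemma compact_compact_cover: "Q \<in> compact_cover \<Longrightarrow> compact Q"
  by (auto simp: compact_cover_def compact_K intro!: compact_Times)

lemma Union_compact_cover: "\<Union>compact_cover = (\<Union>j. K j) \<times> UNIV"
proof (intro equalityI subsetI)
  fix z :: "'a \<times> 'b" assume "z \<in> (\<Union>j. K j) \<times> UNIV"
  then obtain j where "fst z \<in> K j" by auto
  then have "z \<in> K j \<times> cball 0 (real (nat \<lceil>norm (snd z)\<rceil>))"
    by (cases z) (simp add: real_nat_ceiling_ge)
  then show "z \<in> \<Union>compact_cover" unfolding compact_cover_def by blast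
qed (auto simp: compact_cover_def)

lemma measure_coord_codes:
  "1 - 1 / Suc j < measure (distr (M n) borel embed_code) (coord_codes (K j \<times> cball (0::'b) 1))"
proof -
  interpret prob_space "M n" by (rule prob_space_M)
  have closed: "closed (coord_codes (K j \<times> cball (0::'b) 1))"
    by (intro closed_coord_codes compact_Times compact_K compact_cball)
  then have "embed_code -` coord_codes (K j \<times> cball (0::'b) 1) \<in> sets borel"
    using measurable_sets[OF measurable_embed_code borel_closed] by simp
  moreover have "K j \<times> UNIV \<in> sets borel"
    using compact_K[of j] by (simp add: compact_imp_closed closed_Times)
  ultimately have sets: "K j \<times> UNIV \<in> sets (M n)"
      "embed_code -` coord_codes (K j \<times> cball (0::'b) 1) \<in> sets (M n)"
    by (simp_all add: sets_M)
  have "1 - 1 / Suc j < 1 - measure (M n) (- (K j \<times> UNIV))"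
    using measure_outside_K[where j=j and n=n] by simp
  also have "\<dots> = measure (M n) (K j \<times> UNIV)"
    using prob_compl[OF sets(1)] by (simp add: space_M Compl_eq_Diff_UNIV)
  also have "\<dots> \<le> measure (M n) (embed_code -` coord_codes (K j \<times> cball (0::'b) 1))"
    using embed_code_in_coord_codes sets by (intro finite_measure_mono) auto
  finally show ?thesis using closed by (simp add: measure_distr_embed_code)
qed

lemma integral_M_approx:
  fixes F :: "'a \<times> 'b \<Rightarrow> real" and G :: "real \<Rightarrow> real"
  assumes [measurable]: "F \<in> borel_measurable borel" "G \<in> borel_measurable borel"
    and bounded: "\<And>z. \<bar>F z\<bar> \<le> B" "\<And>c. \<bar>G c\<bar> \<le> B"
    and G: "\<And>c. c \<in> coord_codes (K j \<times> cball (0::'b) 1) \<Longrightarrow> G c = cube_lift F (decode_seq c)"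
  shows "\<bar>integral\<^sup>L (M n) F - integral\<^sup>L (distr (M n) borel embed_code) G\<bar> \<le> 2 * B / Suc j"
proof -
  interpret prob_space "M n" by (rule prob_space_M)
  have "0 \<le> B" using bounded(1)[of undefined] by linarith
  have "integral\<^sup>L (distr (M n) borel embed_code) G = (\<integral>z. G (embed_code z) \<partial>M n)"
    by (rule integral_distr) (simp_all add: measurable_M)
  moreover have "\<bar>integral\<^sup>L (M n) F - (\<integral>z. G (embed_code z) \<partial>M n)\<bar> \<le> 2 * B * prob (- (K j \<times> UNIV))"
  proof (rule integral_diff_le_measure)
    show "- (K j \<times> UNIV) \<in> events"
      using sets_outside_K by (simp add: sets_M)
    show "F z = G (embed_code z)" if "z \<notin> - (K j \<times> UNIV)" for z
    proof -
      have "fst z \<in> K j" using that by (cases z) auto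
      then show ?thesis
        by (simp add: G embed_code_in_coord_codes decode_embed_code cube_lift_cube_embedding)
    qed
  qed (use bounded in \<open>simp_all add: measurable_M finite_measure_axioms\<close>)
  moreover have "2 * B * prob (- (K j \<times> UNIV)) \<le> 2 * B * (1 / Suc j)"
    using less_imp_le[OF measure_outside_K[where j=j and n=n]] \<open>0 \<le> B\<close> by (intro mult_left_mono) auto
  ultimately show ?thesis by simp
qed

context
  fixes L :: "real measure"
  assumes L: "real_distribution L"
    and conv: "weak_conv_m (\<lambda>n. distr (M n) borel embed_code) L"
begin

interpretation L: real_distribution L by (rule L)

lemma measure_limit_outside_coord_codes: "measure L (- coord_codes (K j \<times> cball (0::'b) 1)) \<le> 1 / Suc j"
proof -
  have closed: "closed (coord_codes (K j \<times> cball (0::'b) 1))"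
    by (intro closed_coord_codes compact_Times compact_K compact_cball)
  have "1 - 1 / Suc j \<le> measure L (coord_codes (K j \<times> cball (0::'b) 1))"
    by (intro weak_conv_closed_lower_bound[OF real_distribution_distr_embed_code L conv closed]
        less_imp_le[OF measure_coord_codes])
  then show ?thesis
    using L.prob_compl borel_closed[OF closed] by (simp add: Compl_eq_Diff_UNIV L.events_eq_borel)
qed

lemma integral_limit_approx:
  fixes F :: "'a \<times> 'b \<Rightarrow> real" and G :: "real \<Rightarrow> real"
  assumes [measurable]: "F \<in> borel_measurable borel" "G \<in> borel_measurable borel"
    and bounded: "\<And>z. \<bar>F z\<bar> \<le> B" "\<And>c. \<bar>G c\<bar> \<le> B"
    and G: "\<And>c. c \<in> coord_codes (K j \<times> cball (0::'b) 1) \<Longrightarrow> G c = cube_lift F (decode_seq c)"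
  shows "\<bar>integral\<^sup>L L G - integral\<^sup>L (code_limit ((\<Union>j. K j) \<times> UNIV) L) F\<bar> \<le> 2 * B / Suc j"
proof -
  note cover = countable_compact_cover compact_compact_cover
  have "0 \<le> B" using bounded(1)[of undefined] by linarith
  have [measurable]: "- coord_codes (K j \<times> cball (0::'b) 1) \<in> sets borel"
    using sets.compl_sets[OF borel_closed[OF closed_coord_codes[OF compact_Times[OF compact_K compact_cball]]]]
    by (simp add: Compl_eq_Diff_UNIV)
  have "\<bar>integral\<^sup>L L G - (\<integral>c. indicator (embedded_codes ((\<Union>j. K j) \<times> (UNIV :: 'b set))) c * F (decode_point c) \<partial>L)\<bar>
      \<le> 2 * B * measure L (- coord_codes (K j \<times> cball (0::'b) 1))"
  proof (rule integral_diff_le_measure)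
    show "(\<lambda>c. indicator (embedded_codes ((\<Union>j. K j) \<times> (UNIV :: 'b set))) c * F (decode_point c)) \<in> borel_measurable L"
      using borel_measurable_indicator_decode_point[OF cover L] by (simp add: Union_compact_cover)
    show "G c = indicator (embedded_codes ((\<Union>j. K j) \<times> (UNIV :: 'b set))) c * F (decode_point c)"
      if "c \<notin> - coord_codes (K j \<times> cball (0::'b) 1)" for c
      using that cube_lift_coord_codes[where F=F and A="K j" and B="\<Union>j. K j" and c=c] by (auto simp: G)
  qed (use bounded \<open>0 \<le> B\<close> in \<open>auto simp: L.events_eq_borel L.finite_measure_axioms indicator_def\<close>)
  moreover have "2 * B * measure L (- coord_codes (K j \<times> cball (0::'b) 1)) \<le> 2 * B * (1 / Suc j)"
    using measure_limit_outside_coord_codes[of j] \<open>0 \<le> B\<close> by (intro mult_left_mono) auto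
  ultimately show ?thesis
    using integral_code_limit[OF cover L] by (simp add: Union_compact_cover)
qed

theorem weague_conv_code_limit: "weague_conv M (code_limit ((\<Union>j. K j) \<times> UNIV) L)"
  unfolding weague_conv_def
proof (intro allI impI, elim conjE)
  fix F :: "'a \<times> 'b \<Rightarrow> real"
  assume cont: "continuous_on UNIV F" and "bounded (range F)"
    and vanish: "\<forall>e>0. \<exists>R. \<forall>x y. R \<le> norm y \<longrightarrow> \<bar>F (x, y)\<bar> < e"
  then obtain B where B: "\<And>z. \<bar>F z\<bar> \<le> B" unfolding bounded_iff by auto
  have [measurable]: "F \<in> borel_measurable borel" using cont by (rule borel_measurable_continuous_onI)
  have "\<exists>G. continuous_on UNIV G \<and> (\<forall>c\<in>coord_codes (K j \<times> cball (0::'b) 1). G c = cube_lift F (decode_seq c))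
      \<and> (\<forall>c. \<bar>G c\<bar> \<le> B)" for j
    by (rule cube_lift_extension[OF compact_K cont vanish B]) blast
  then obtain G where G: "\<And>j. continuous_on UNIV (G j)"
    "\<And>j c. c \<in> coord_codes (K j \<times> cball (0::'b) 1) \<Longrightarrow> G j c = cube_lift F (decode_seq c)"
    "\<And>j c. \<bar>G j c\<bar> \<le> B"
    by metis
  have [measurable]: "G j \<in> borel_measurable borel" for j
    using G(1) by (rule borel_measurable_continuous_onI)
  show "(\<lambda>n. integral\<^sup>L (M n) F) \<longlonglongrightarrow> integral\<^sup>L (code_limit ((\<Union>j. K j) \<times> UNIV) L) F"
  proof (rule LIMSEQ_uniform_approximation[where \<delta>="\<lambda>j. 2 * B / Suc j"
        and b="\<lambda>j n. integral\<^sup>L (distr (M n) borel embed_code) (G j)" and c="\<lambda>j. integral\<^sup>L L (G j)"])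
    show "(\<lambda>j. 2 * B / Suc j) \<longlonglongrightarrow> 0"
      using LIMSEQ_Suc[OF lim_const_over_n[of "2 * B"]] by simp
    show "(\<lambda>n. integral\<^sup>L (distr (M n) borel embed_code) (G j)) \<longlonglongrightarrow> integral\<^sup>L L (G j)" for j
      using G(1,3) continuous_on_eq_continuous_at[of UNIV "G j"]
      by (intro weak_conv_imp_integral_bdd_continuous_conv[OF real_distribution_distr_embed_code L conv]) auto
    show "\<bar>integral\<^sup>L (M n) F - integral\<^sup>L (distr (M n) borel embed_code) (G j)\<bar> \<le> 2 * B / Suc j" for j n
      by (rule integral_M_approx) (use B G in auto)
    show "\<bar>integral\<^sup>L L (G j) - integral\<^sup>L (code_limit ((\<Union>j. K j) \<times> UNIV) L) F\<bar> \<le> 2 * B / Suc j" for j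
      by (rule integral_limit_approx) (use B G in auto)
  qed
qed

end

end

lemma tight_marginals_of_uniformly_tight:
  fixes M :: "nat \<Rightarrow> ('a::{metric_space,second_countable_topology} \<times> 'b::euclidean_space) measure"
  assumes prob: "\<And>n. prob_space (M n)" and sets: "\<And>n. sets (M n) = sets borel"
    and tight: "uniformly_tight (\<lambda>n. distr (M n) borel fst)"
  obtains K where "tight_marginals M K"
proof -
  have ex: "\<forall>j. \<exists>K. compact K \<and> (\<forall>n. measure (distr (M n) borel fst) (UNIV - K) < 1 / Suc j)"
    using tight unfolding uniformly_tight_def by simp
  then obtain K where "\<forall>j. compact (K j) \<and> (\<forall>n. measure (distr (M n) borel fst) (UNIV - K j) < 1 / Suc j)"
    using choice[OF ex] by blast
  then have K: "\<And>j. compact (K j)" "\<And>j n. measure (distr (M n) borel fst) (UNIV - K j) < 1 / Suc j"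
    by blast+
  have "measure (M n) (- (K j \<times> UNIV)) < 1 / Suc j" for j n
  proof -
    have "fst \<in> measurable (M n) (borel :: 'a measure)"
      unfolding measurable_cong_sets[OF sets refl]
      by (rule borel_measurable_continuous_onI) (intro continuous_intros)
    moreover have "fst -` (UNIV - K j) \<inter> space (M n) = - (K j \<times> UNIV)"
      using sets_eq_imp_space_eq[OF sets[of n]] by auto
    ultimately show ?thesis
      using K(2)[where j=j and n=n] compact_imp_closed[OF K(1)[of j]] by (simp add: measure_distr)
  qed
  then show ?thesis using prob sets K(1) by (intro that tight_marginals.intro)
qed

theorem lemma2p1:
  fixes M :: "nat \<Rightarrow> ('a::polish_space \<times> 'b::euclidean_space) measure"
  assumes "\<And>n. prob_space (M n)"
    and "\<And>n. sets (M n) = sets borel"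
    and "uniformly_tight (\<lambda>n. distr (M n) borel fst)"
  shows "\<exists>r l. strict_mono r \<and> subprob_space l \<and> sets l = sets borel \<and> weague_conv (M \<circ> r) l"
proof -
  obtain K where "tight_marginals M K"
    using tight_marginals_of_uniformly_tight[OF assms] by blast
  then interpret tight_marginals M K .
  from tight_imp_convergent_subsubsequence[OF tight_distr_embed_code strict_mono_id]
  obtain r L where r: "strict_mono r" and L: "real_distribution L"
    and conv: "weak_conv_m ((\<lambda>n. distr (M n) borel embed_code) \<circ> id \<circ> r) L"
    by (elim exE conjE)
  interpret subsequence: tight_marginals "M \<circ> r" K
    by (rule tight_marginals.intro) (simp_all only: comp_apply prob_space_M sets_M compact_K measure_outside_K)
  have "weague_conv (M \<circ> r) (code_limit ((\<Union>j. K j) \<times> (UNIV :: 'b set)) L)"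
    using subsequence.weague_conv_code_limit L conv by (simp add: comp_def)
  moreover have "subprob_space (code_limit ((\<Union>j. K j) \<times> (UNIV :: 'b set)) L)"
    using subprob_space_code_limit[OF countable_compact_cover compact_compact_cover L]
    by (simp add: Union_compact_cover)
  ultimately show ?thesis using r sets_code_limit by blast
qed

end
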